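(* For both the overlap preference model and the cost preference model, and for every pair $\langle R,F\rangle$ of a shortlisting rule $R$ and an allocation rule $F$: (i) if $\langle R,F\rangle$ is R-FSSP-O then it is R-FSSP-A and R-FSSP-P; (ii) if $\langle R,F\rangle$ is U-FSSP-O then it is U-FSSP-A and U-FSSP-P; (iii) for each type of manipulation X $\in\{$P, O, A$\}$, if $\langle R,F\rangle$ is R-FSSP-X then it is U-FSSP-X.
   Context: Let $\mathbb{P}=\{p_1,\dots,p_m\}$ be a finite set of projects, $c:\mathbb{P}\to\mathbb{N}$ a cost function with $c(P)=\sum_{p\in P}c(p)$, $B\in\mathbb{N}$ a budget with $c(p)\le B$ for all $p$; agents $\mathcal{N}=\{1,\dots,n\}$. Tie-breaking: for nonempty $P\subseteq\mathbb{P}$, $T(P)$ is its lowest-index project; for a nonempty family $\mathfrak{P}$ of subsets of $\mathbb{P}$, $T(\mathfrak{P})$ is the unique $P\in\mathfrak{P}$ such that for all $P'\in\mathfrak{P}\setminus\{P\}$ the lowest-index project of $(P\setminus P')\cup(P'\setminus P)$ lies in $P$. Greedy selection $\mathit{GREED}(P,\gg)$, for $P\subseteq\mathbb{P}$ and a strict linear order $\gg$ on $P$, examines projects in the order $\gg$ and selects a project iff doing so keeps the total cost of selected projects at most $B$. Shortlisting stage: a shortlisting instance is $\langle\mathbb{P},c,B\rangle$; a shortlisting profile is $\boldsymbol{P}=(P_1,\dots,P_n)$, $P_i\subseteq\mathbb{P}$, $\bigcup\boldsymbol{P}=P_1\cup\dots\cup P_n$; $(\boldsymbol{P}_{-i},P_i')$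 is $\boldsymbol{P}$ with $P_i$ replaced by $P_i'$; a shortlisting rule $R$ outputs $R(I,\boldsymbol{P})\subseteq\bigcup\boldsymbol{P}$. Each agent $i$ has an awareness set $C_i\subseteq\mathbb{P}$; $\boldsymbol{C}=(C_1,\dots,C_n)$. Allocation stage: an allocation instance is $\langle\mathcal{P},c,B\rangle$ with $\mathcal{P}\subseteq\mathbb{P}$; a profile is $\boldsymbol{A}=(A_1,\dots,A_n)$ with $A_i\subseteq\mathcal{P}$; a set $A\subseteq\mathcal{P}$ is feasible if $c(A)\le B$; an allocation rule $F$ maps $(I,\boldsymbol{A})$ to a feasible $F(I,\boldsymbol{A})\subseteq\mathcal{P}$. Preferences: each agent $i$ has a strict linear order $\rhd_i$ on $\mathbb{P}$; for $\mathcal{P}\subseteq\mathbb{P}$, $\mathit{top}_i(\mathcal{P})=\mathit{GREED}(\mathcal{P},\rhd_i|_{\mathcal{P}})$ and $\boldsymbol{top}(\mathcal{P})=(\mathit{top}_1(\mathcal{P}),\dots,\mathit{top}_n(\mathcal{P}))$. For a set $P\subseteq\mathbb{P}$, under the overlap model $A\succeq_P A'$ iff $|A\cap P|\ge|A'\cap P|$; under the cost model $A\succeq_P A'$ iff $c(A\cap P)\ge c(A'\cap P)$; $\succ_P$ is the strict part. For a relation $\succ$ and a family $\mathfrak{P}$, $\mathit{best}(\succ,\mathfrak{P})$ is the set of elements of $\mathfrak{P}$ undominated w.r.t. $\succ$. Best response: for an allocation instance $I=\langle\mathcal{P},c,B\rangle$, profile $\boldsymbol{A}$ and agent $i$, $A_i^\star(I,\boldsymbol{A})=T(\mathit{best}(\succ_{\mathit{top}_i(\mathcal{P})},\{F(I,(\boldsymbol{A}_{-i},A_i'))\mid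 A_i'\subseteq\mathcal{P}\}))$ and $F^\star(I,\boldsymbol{A})=F(I,(\boldsymbol{A}_{-i},A_i^\star(I,\boldsymbol{A})))$. Manipulation: given $R$, $F$, a shortlisting instance $I_1$, profile $\boldsymbol{P}$, agent $i$ and $P_i'\subseteq\mathbb{P}$, let $\mathcal{P}=R(I_1,\boldsymbol{P})$, $\mathcal{P}'=R(I_1,(\boldsymbol{P}_{-i},P_i'))$, $I_2=\langle\mathcal{P},c,B\rangle$, $I_2'=\langle\mathcal{P}',c,B\rangle$, and $Q=\mathit{top}_i(\mathcal{P}\cup\mathcal{P}')$. $P_i'$ is a successful pessimistic manipulation if for all profiles $\boldsymbol{A}$ on $\mathcal{P}$ and $\boldsymbol{A}'$ on $\mathcal{P}'$, $F^\star(I_2',\boldsymbol{A}')\succeq_Q F^\star(I_2,\boldsymbol{A})$, strictly for at least one pair; a successful optimistic manipulation if for at least one $\boldsymbol{A}$ on $\mathcal{P}$ and one $\boldsymbol{A}'$ on $\mathcal{P}'$, $F^\star(I_2',\boldsymbol{A}')\succ_Q F^\star(I_2,\boldsymbol{A})$; a successful anticipative manipulation if $F^\star(I_2',\boldsymbol{top}(\mathcal{P}'))\succ_Q F^\star(I_2,\boldsymbol{top}(\mathcal{P}))$. FSSP: for a preference model, $\langle R,F\rangle$ is R-FSSP w.r.t. a manipulation type if for every shortlisting instance, every awareness profile $\boldsymbol{C}$, every shortlisting profile $\boldsymbol{P}$ with $P_{i'}\subseteq C_{i'}$ for all $i'$, and every agent $i$, there is no $P_i'\subseteq C_i$ such that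 submitting $P_i'$ instead of $\mathit{top}_i(C_i)$ (i.e., moving from $(\boldsymbol{P}_{-i},\mathit{top}_i(C_i))$ to $(\boldsymbol{P}_{-i},P_i')$) is a successful manipulation of that type for $i$. $\langle R,F\rangle$ is U-FSSP w.r.t. that type if the same holds with $P_i'\subseteq C_i\cup\bigcup\boldsymbol{P}$ and with $\mathit{top}_i(C_i\cup\bigcup\boldsymbol{P})$ in place of $\mathit{top}_i(C_i)$. Suffixes -P, -O, -A denote pessimistic, optimistic and anticipative manipulation. *)

theory Defs
  imports Main
begin

(* Projects are natural numbers; the index order of projects is the order on nat.  Profiles over the agents 1..n are
   lists of length n (agent i is list position i). *)

datatype pref_model = Overlap | Cost
datatype manip_type = Pess | Opt | Antic

type_synonym rule = "nat set \<Rightarrow> (nat \<Rightarrow> nat) \<Rightarrow> nat \<Rightarrow> nat set list \<Rightarrow> nat set"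

definition valid_instance :: "nat set \<Rightarrow> (nat \<Rightarrow> nat) \<Rightarrow> nat \<Rightarrow> bool" where
  "valid_instance Pr c B \<longleftrightarrow> finite Pr \<and> (\<forall>p\<in>Pr. c p \<le> B)"

(* the elements of P listed along the strict linear order r (best first) *)
definition ord_list :: "nat rel \<Rightarrow> nat set \<Rightarrow> nat list" where
  "ord_list r P = (SOME xs. distinct xs \<and> set xs = P \<and> sorted_wrt (\<lambda>x y. (x, y) \<in> r) xs)"

fun greedy_aux :: "(nat \<Rightarrow> nat) \<Rightarrow> nat \<Rightarrow> nat list \<Rightarrow> nat set \<Rightarrow> nat set" where
  "greedy_aux c B [] S = S"
| "greedy_aux c B (x # xs) S = greedy_aux c B xs (if sum c S + c x \<le> B then insert x S else S)"

definition GREED :: "(nat \<Rightarrow> nat) \<Rightarrow> nat \<Rightarrow> nat set \<Rightarrow> nat rel \<Rightarrow> nat set" where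
  "GREED c B P r = greedy_aux c B (ord_list (r \<inter> (P \<times> P)) P) {}"

definition top :: "(nat \<Rightarrow> nat) \<Rightarrow> nat \<Rightarrow> nat rel \<Rightarrow> nat set \<Rightarrow> nat set" where
  "top c B r P = GREED c B P r"

definition util :: "pref_model \<Rightarrow> (nat \<Rightarrow> nat) \<Rightarrow> nat set \<Rightarrow> nat set \<Rightarrow> nat" where
  "util m c Q A = (case m of Overlap \<Rightarrow> card (A \<inter> Q) | Cost \<Rightarrow> sum c (A \<inter> Q))"

definition weak_pref :: "pref_model \<Rightarrow> (nat \<Rightarrow> nat) \<Rightarrow> nat set \<Rightarrow> nat set \<Rightarrow> nat set \<Rightarrow> bool" where
  "weak_pref m c Q A A' \<longleftrightarrow> util m c Q A \<ge> util m c Q A'"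

definition strict_pref :: "pref_model \<Rightarrow> (nat \<Rightarrow> nat) \<Rightarrow> nat set \<Rightarrow> nat set \<Rightarrow> nat set \<Rightarrow> bool" where
  "strict_pref m c Q A A' \<longleftrightarrow> weak_pref m c Q A A' \<and> \<not> weak_pref m c Q A' A"

definition best :: "(nat set \<Rightarrow> nat set \<Rightarrow> bool) \<Rightarrow> nat set set \<Rightarrow> nat set set" where
  "best succ Fam = {A \<in> Fam. \<not> (\<exists>A'\<in>Fam. succ A' A)}"

definition tb_family :: "nat set set \<Rightarrow> nat set" where
  "tb_family Fam = (THE P. P \<in> Fam \<and> (\<forall>P'\<in>Fam - {P}. Min ((P - P') \<union> (P' - P)) \<in> P))"

definition is_shortlisting_rule :: "rule \<Rightarrow> bool" where
  "is_shortlisting_rule R \<longleftrightarrow> (\<forall>Pr c B Ps. valid_instance Pr c B \<longrightarrow> (\<forall>P\<in>set Ps. P \<subseteq> Pr)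
      \<longrightarrow> R Pr c B Ps \<subseteq> \<Union>(set Ps))"

definition is_allocation_rule :: "rule \<Rightarrow> bool" where
  "is_allocation_rule F \<longleftrightarrow> (\<forall>P c B As. valid_instance P c B \<longrightarrow> (\<forall>A\<in>set As. A \<subseteq> P)
      \<longrightarrow> F P c B As \<subseteq> P \<and> sum c (F P c B As) \<le> B)"

definition profiles_on :: "nat set \<Rightarrow> nat \<Rightarrow> nat set list set" where
  "profiles_on P n = {As. length As = n \<and> (\<forall>A\<in>set As. A \<subseteq> P)}"

definition best_resp :: "pref_model \<Rightarrow> rule \<Rightarrow> nat set \<Rightarrow> (nat \<Rightarrow> nat) \<Rightarrow> nat
    \<Rightarrow> nat rel list \<Rightarrow> nat \<Rightarrow> nat set list \<Rightarrow> nat set" where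
  "best_resp m F P c B prefs i As =
     tb_family (best (strict_pref m c (top c B (prefs ! i) P))
                     {F P c B (As[i := A']) | A'. A' \<subseteq> P})"

definition F_star :: "pref_model \<Rightarrow> rule \<Rightarrow> nat set \<Rightarrow> (nat \<Rightarrow> nat) \<Rightarrow> nat
    \<Rightarrow> nat rel list \<Rightarrow> nat \<Rightarrow> nat set list \<Rightarrow> nat set" where
  "F_star m F P c B prefs i As = F P c B (As[i := best_resp m F P c B prefs i As])"

definition successful_manip :: "pref_model \<Rightarrow> manip_type \<Rightarrow> rule \<Rightarrow> rule \<Rightarrow> nat set
    \<Rightarrow> (nat \<Rightarrow> nat) \<Rightarrow> nat \<Rightarrow> nat rel list \<Rightarrow> nat set list \<Rightarrow> nat \<Rightarrow> nat set \<Rightarrow> bool" where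
  "successful_manip m X R F Pr c B prefs Ps i P' =
    (let P1 = R Pr c B Ps; P2 = R Pr c B (Ps[i := P']); n = length Ps;
         Q = top c B (prefs ! i) (P1 \<union> P2);
         G1 = F_star m F P1 c B prefs i; G2 = F_star m F P2 c B prefs i
     in case X of
       Pess \<Rightarrow> (\<forall>A\<in>profiles_on P1 n. \<forall>A'\<in>profiles_on P2 n. weak_pref m c Q (G2 A') (G1 A))
              \<and> (\<exists>A\<in>profiles_on P1 n. \<exists>A'\<in>profiles_on P2 n. strict_pref m c Q (G2 A') (G1 A))
     | Opt \<Rightarrow> (\<exists>A\<in>profiles_on P1 n. \<exists>A'\<in>profiles_on P2 n. strict_pref m c Q (G2 A') (G1 A))
     | Antic \<Rightarrow> strict_pref m c Q (G2 (map (\<lambda>r. top c B r P2) prefs))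
                                     (G1 (map (\<lambda>r. top c B r P1) prefs)))"

definition R_FSSP :: "pref_model \<Rightarrow> manip_type \<Rightarrow> rule \<Rightarrow> rule \<Rightarrow> bool" where
  "R_FSSP m X R F \<longleftrightarrow>
    (\<forall>Pr c B prefs Cs Ps i P'.
       valid_instance Pr c B \<longrightarrow> length prefs = length Ps \<longrightarrow> length Cs = length Ps \<longrightarrow>
       (\<forall>r\<in>set prefs. strict_linear_order_on Pr r) \<longrightarrow>
       (\<forall>j<length Ps. Cs ! j \<subseteq> Pr \<and> Ps ! j \<subseteq> Cs ! j) \<longrightarrow>
       i < length Ps \<longrightarrow> P' \<subseteq> Cs ! i \<longrightarrow>
       \<not> successful_manip m X R F Pr c B prefs (Ps[i := top c B (prefs ! i) (Cs ! i)]) i P')"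

definition U_FSSP :: "pref_model \<Rightarrow> manip_type \<Rightarrow> rule \<Rightarrow> rule \<Rightarrow> bool" where
  "U_FSSP m X R F \<longleftrightarrow>
    (\<forall>Pr c B prefs Cs Ps i P'.
       valid_instance Pr c B \<longrightarrow> length prefs = length Ps \<longrightarrow> length Cs = length Ps \<longrightarrow>
       (\<forall>r\<in>set prefs. strict_linear_order_on Pr r) \<longrightarrow>
       (\<forall>j<length Ps. Cs ! j \<subseteq> Pr \<and> Ps ! j \<subseteq> Cs ! j) \<longrightarrow>
       i < length Ps \<longrightarrow> P' \<subseteq> Cs ! i \<union> \<Union>(set Ps) \<longrightarrow>
       \<not> successful_manip m X R F Pr c B prefs
           (Ps[i := top c B (prefs ! i) (Cs ! i \<union> \<Union>(set Ps))]) i P')"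

end

theory Submission
  imports Defs
begin

text \<open>
  Pessimistic success implies optimistic success by definition, and anticipative success is
  optimistic success witnessed by the truthful profiles; these are admissible profiles because
  greedy selection only ever picks shortlisted projects. An unrestricted manipulation is a
  restricted one for an agent whose awareness set has been enlarged by all submitted projects.
\<close>

lemma ex_distinct_sorted_wrt_list:
  assumes "finite A" and "trans r" and "irrefl r" and "total_on A r"
  shows "\<exists>xs. distinct xs \<and> set xs = A \<and> sorted_wrt (\<lambda>x y. (x, y) \<in> r) xs"
  using assms(1,4)
proof (induction A rule: finite_induct)
  case empty
  show ?case by simp
next
  case (insert x A)
  then obtain xs where xs: "distinct xs" "set xs = A" "sorted_wrt (\<lambda>x y. (x, y) \<in> r) xs"
    by (meson subset_insertI total_on_subset)
  have asym: "(y, x) \<in> r \<Longrightarrow> (x, y) \<notin> r" for y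
    using assms(2,3) by (meson irrefl_def transD)
  have total: "(y, x) \<in> r \<or> (x, y) \<in> r" if "y \<in> A" for y
    using insert.prems insert.hyps(2) that by (auto simp: total_on_def)
  let ?ys = "filter (\<lambda>y. (y, x) \<in> r) xs @ x # filter (\<lambda>y. (x, y) \<in> r) xs"
  have "distinct ?ys \<and> set ?ys = insert x A \<and> sorted_wrt (\<lambda>x y. (x, y) \<in> r) ?ys"
    using xs asym total assms(2) insert.hyps(2)
    by (auto simp: sorted_wrt_append sorted_wrt_filter dest: transD)
  then show ?case by blast
qed

lemma set_ord_list:
  assumes "finite P" and "strict_linear_order_on P r"
  shows "set (ord_list (r \<inter> P \<times> P) P) = P"
proof -
  have "trans (r \<inter> P \<times> P)" "irrefl (r \<inter> P \<times> P)" "total_on P (r \<inter> P \<times> P)"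
    using assms(2) by (auto simp: strict_linear_order_on_def trans_def irrefl_def total_on_def)
  then have "\<exists>xs. distinct xs \<and> set xs = P \<and> sorted_wrt (\<lambda>x y. (x, y) \<in> r \<inter> P \<times> P) xs"
    using ex_distinct_sorted_wrt_list assms(1) by blast
  then show ?thesis
    unfolding ord_list_def by (rule someI2_ex) blast
qed

lemma greedy_aux_subset: "greedy_aux c B xs S \<subseteq> set xs \<union> S"
proof (induction xs arbitrary: S)
  case (Cons x xs)
  have "greedy_aux c B (x # xs) S \<subseteq> set xs \<union> (if sum c S + c x \<le> B then insert x S else S)"
    using Cons.IH by simp
  then show ?case by auto
qed simp

lemma top_subset:
  assumes "finite P" and "strict_linear_order_on P r"
  shows "top c B r P \<subseteq> P"
  using greedy_aux_subset set_ord_list[OF assms] by (fastforce simp: top_def GREED_def)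

lemma strict_linear_order_on_subset:
  "strict_linear_order_on B r \<Longrightarrow> A \<subseteq> B \<Longrightarrow> strict_linear_order_on A r"
  by (auto simp: strict_linear_order_on_def intro: total_on_subset)

lemma truthful_profile_in_profiles_on:
  assumes "finite Pr" and "P \<subseteq> Pr" and "\<forall>r\<in>set prefs. strict_linear_order_on Pr r"
  shows "map (\<lambda>r. top c B r P) prefs \<in> profiles_on P (length prefs)"
proof -
  have "finite P"
    using assms(1,2) by (rule finite_subset[rotated])
  then have "top c B r P \<subseteq> P" if "r \<in> set prefs" for r
    using top_subset strict_linear_order_on_subset assms(2,3) that by blast
  then show ?thesis by (auto simp: profiles_on_def)
qed

lemma shortlist_subset:
  assumes "is_shortlisting_rule R" and "valid_instance Pr c B" and "\<forall>P\<in>set Ps. P \<subseteq> Pr"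
  shows "R Pr c B Ps \<subseteq> Pr"
  using assms unfolding is_shortlisting_rule_def by blast

lemma successful_manip_imp_Opt:
  assumes R: "is_shortlisting_rule R" and I: "valid_instance Pr c B"
    and prefs: "length prefs = length Ps" "\<forall>r\<in>set prefs. strict_linear_order_on Pr r"
    and Ps: "\<forall>P\<in>set Ps. P \<subseteq> Pr" and P': "P' \<subseteq> Pr"
    and manip: "successful_manip m X R F Pr c B prefs Ps i P'"
  shows "successful_manip m Opt R F Pr c B prefs Ps i P'"
proof (cases X)
  case Pess
  then show ?thesis
    using manip unfolding successful_manip_def Let_def by simp
next
  case Opt
  then show ?thesis using manip by simp
next
  case Antic
  let ?P1 = "R Pr c B Ps" and ?P2 = "R Pr c B (Ps[i := P'])"
  have "set (Ps[i := P']) \<subseteq> insert P' (set Ps)"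
    by (rule set_update_subset_insert)
  then have "\<forall>P\<in>set (Ps[i := P']). P \<subseteq> Pr"
    using Ps P' by blast
  then have "?P1 \<subseteq> Pr" "?P2 \<subseteq> Pr"
    using shortlist_subset[OF R I] Ps by simp_all
  moreover have "finite Pr"
    using I by (simp add: valid_instance_def)
  ultimately have "map (\<lambda>r. top c B r ?P1) prefs \<in> profiles_on ?P1 (length Ps)"
    and "map (\<lambda>r. top c B r ?P2) prefs \<in> profiles_on ?P2 (length Ps)"
    using truthful_profile_in_profiles_on prefs by metis+
  then show ?thesis
    using manip Antic unfolding successful_manip_def Let_def by auto
qed

text \<open>
  \<open>K Cs Ps i\<close> is the set of projects agent \<open>i\<close> is allowed to report from: its awareness set for
  R-FSSP, and its awareness set together with all submitted projects for U-FSSP.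
\<close>

definition FSSP_wrt :: "(nat set list \<Rightarrow> nat set list \<Rightarrow> nat \<Rightarrow> nat set)
    \<Rightarrow> pref_model \<Rightarrow> manip_type \<Rightarrow> rule \<Rightarrow> rule \<Rightarrow> bool" where
  "FSSP_wrt K m X R F \<longleftrightarrow>
    (\<forall>Pr c B prefs Cs Ps i P'.
       valid_instance Pr c B \<longrightarrow> length prefs = length Ps \<longrightarrow> length Cs = length Ps \<longrightarrow>
       (\<forall>r\<in>set prefs. strict_linear_order_on Pr r) \<longrightarrow>
       (\<forall>j<length Ps. Cs ! j \<subseteq> Pr \<and> Ps ! j \<subseteq> Cs ! j) \<longrightarrow>
       i < length Ps \<longrightarrow> P' \<subseteq> K Cs Ps i \<longrightarrow>
       \<not> successful_manip m X R F Pr c B prefs (Ps[i := top c B (prefs ! i) (K Cs Ps i)]) i P')"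

lemma R_FSSP_eq_FSSP_wrt: "R_FSSP = FSSP_wrt (\<lambda>Cs Ps i. Cs ! i)"
  by (intro ext) (simp add: R_FSSP_def FSSP_wrt_def)

lemma U_FSSP_eq_FSSP_wrt: "U_FSSP = FSSP_wrt (\<lambda>Cs Ps i. Cs ! i \<union> \<Union>(set Ps))"
  by (intro ext) (simp add: U_FSSP_def FSSP_wrt_def)

lemma submitted_projects_subset:
  "\<forall>j<length Ps. Cs ! j \<subseteq> Pr \<and> Ps ! j \<subseteq> Cs ! j \<Longrightarrow> \<Union>(set Ps) \<subseteq> Pr"
  by (fastforce simp: in_set_conv_nth)

lemma FSSP_wrt_Opt_imp:
  assumes R: "is_shortlisting_rule R"
    and K: "\<And>Pr Cs Ps i. \<forall>j<length Ps. Cs ! j \<subseteq> Pr \<and> Ps ! j \<subseteq> Cs ! j \<Longrightarrow> i < length Ps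
      \<Longrightarrow> K Cs Ps i \<subseteq> Pr"
    and Opt: "FSSP_wrt K m Opt R F"
  shows "FSSP_wrt K m X R F"
  unfolding FSSP_wrt_def
proof (intro allI impI notI)
  fix Pr c B prefs Cs Ps i P'
  assume I: "valid_instance Pr c B" and len: "length prefs = length Ps" "length Cs = length Ps"
    and prefs: "\<forall>r\<in>set prefs. strict_linear_order_on Pr r"
    and Cs: "\<forall>j<length Ps. Cs ! j \<subseteq> Pr \<and> Ps ! j \<subseteq> Cs ! j"
    and i: "i < length Ps" and P': "P' \<subseteq> K Cs Ps i"
    and manip: "successful_manip m X R F Pr c B prefs
      (Ps[i := top c B (prefs ! i) (K Cs Ps i)]) i P'"
  have K_Pr: "K Cs Ps i \<subseteq> Pr"
    using K[OF Cs i] .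
  have "finite (K Cs Ps i)"
    using I K_Pr unfolding valid_instance_def by (meson finite_subset)
  moreover have "strict_linear_order_on (K Cs Ps i) (prefs ! i)"
    using prefs len(1) i K_Pr strict_linear_order_on_subset by (metis nth_mem)
  ultimately have "top c B (prefs ! i) (K Cs Ps i) \<subseteq> Pr"
    using top_subset K_Pr by blast
  moreover have "\<Union>(set Ps) \<subseteq> Pr"
    using Cs by (rule submitted_projects_subset)
  moreover have "set (Ps[i := top c B (prefs ! i) (K Cs Ps i)])
      \<subseteq> insert (top c B (prefs ! i) (K Cs Ps i)) (set Ps)"
    by (rule set_update_subset_insert)
  ultimately have "\<forall>P\<in>set (Ps[i := top c B (prefs ! i) (K Cs Ps i)]). P \<subseteq> Pr"
    by blast
  then have "successful_manip m Opt R F Pr c B prefs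
      (Ps[i := top c B (prefs ! i) (K Cs Ps i)]) i P'"
    using successful_manip_imp_Opt[OF R I _ prefs _ _ manip] len(1) P' K_Pr
    by simp
  then show False
    using Opt I len prefs Cs i P' unfolding FSSP_wrt_def by blast
qed

lemma R_FSSP_Opt_imp: "is_shortlisting_rule R \<Longrightarrow> R_FSSP m Opt R F \<Longrightarrow> R_FSSP m X R F"
  unfolding R_FSSP_eq_FSSP_wrt by (rule FSSP_wrt_Opt_imp) auto

lemma U_FSSP_Opt_imp: "is_shortlisting_rule R \<Longrightarrow> U_FSSP m Opt R F \<Longrightarrow> U_FSSP m X R F"
  unfolding U_FSSP_eq_FSSP_wrt by (rule FSSP_wrt_Opt_imp) (simp_all add: submitted_projects_subset)

lemma R_FSSP_imp_U_FSSP: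
  assumes R_FSSP: "R_FSSP m X R F"
  shows "U_FSSP m X R F"
  unfolding U_FSSP_def
proof (intro allI impI)
  fix Pr c B prefs Cs Ps i P'
  assume I: "valid_instance Pr c B" and len: "length prefs = length Ps" "length Cs = length Ps"
    and prefs: "\<forall>r\<in>set prefs. strict_linear_order_on Pr r"
    and Cs: "\<forall>j<length Ps. Cs ! j \<subseteq> Pr \<and> Ps ! j \<subseteq> Cs ! j"
    and i: "i < length Ps" and P': "P' \<subseteq> Cs ! i \<union> \<Union>(set Ps)"
  define Cs' where "Cs' = Cs[i := Cs ! i \<union> \<Union>(set Ps)]"
  have "\<forall>j<length Ps. Cs' ! j \<subseteq> Pr \<and> Ps ! j \<subseteq> Cs' ! j"
    using Cs submitted_projects_subset[OF Cs] i len(2) by (auto simp: Cs'_def nth_list_update)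
  moreover have "Cs' ! i = Cs ! i \<union> \<Union>(set Ps)"
    using i len(2) by (simp add: Cs'_def)
  moreover have "length Cs' = length Ps"
    using len(2) by (simp add: Cs'_def)
  ultimately show "\<not> successful_manip m X R F Pr c B prefs
      (Ps[i := top c B (prefs ! i) (Cs ! i \<union> \<Union>(set Ps))]) i P'"
    using R_FSSP[unfolded R_FSSP_def, rule_format, of Pr c B prefs Ps Cs' i P'] I len(1) prefs i P'
    by simp
qed

theorem proposition4:
  fixes m :: pref_model and R F :: rule
  assumes "is_shortlisting_rule R" and "is_allocation_rule F"
  shows "(R_FSSP m Opt R F \<longrightarrow> R_FSSP m Antic R F \<and> R_FSSP m Pess R F)
       \<and> (U_FSSP m Opt R F \<longrightarrow> U_FSSP m Antic R F \<and> U_FSSP m Pess R F)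
       \<and> (\<forall>X. R_FSSP m X R F \<longrightarrow> U_FSSP m X R F)"
  using R_FSSP_Opt_imp[OF assms(1)] U_FSSP_Opt_imp[OF assms(1)] R_FSSP_imp_U_FSSP by blast

end
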